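(* For all $x,u\in\mathbb R$, \[\int_0^1|\dot K_t(x,u)|\,dt\le 10\sup_{0<t\le1}K_t(x,u).\]
   Context: $R(x)=x^2/2$. $K_t(x,u)=\frac{e^{R(x)}}{\sqrt{1-e^{-2t}}}\exp\bigl(-\frac12\frac{(e^{-t}u-x)^2}{1-e^{-2t}}\bigr)$ for $t>0$, and $\dot K_t=\partial K_t/\partial t$. *)

theory Defs
  imports "HOL-Analysis.Analysis"
begin

definition R :: "real \<Rightarrow> real" where
  "R x = x\<^sup>2 / 2"

definition K :: "real \<Rightarrow> real \<Rightarrow> real \<Rightarrow> real" where
  "K t x u = exp (R x) / sqrt (1 - exp (-2*t)) *
     exp (-(1/2) * (exp (-t) * u - x)\<^sup>2 / (1 - exp (-2*t)))"

definition Kdot :: "real \<Rightarrow> real \<Rightarrow> real \<Rightarrow> real" where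
  "Kdot t x u = deriv (\<lambda>s. K s x u) t"

end

theory Submission
  imports Defs "HOL-Computational_Algebra.Polynomial"
begin

text \<open>
  For \<open>t > 0\<close> we have \<open>K t x u = exp (log_K t x u)\<close> and, writing \<open>s = exp (-t)\<close>, the
  \<open>t\<close>-derivative of \<open>log_K\<close> is \<open>s p(s) / (1 - s^2)^2\<close> for a monic cubic \<open>p\<close>. So \<open>Kdot\<close> has
  at most three zeros in \<open>(0, 1]\<close>, and \<open>t \<mapsto> K t x u\<close> is monotone on at most four subintervals.
  On each of them the integral of \<open>|Kdot|\<close> is the increment of \<open>K\<close>, which is at most
  \<open>sup K\<close> because \<open>K > 0\<close>. Hence the left-hand side is even bounded by \<open>4 sup K\<close>.
\<close>

lemma continuous_on_sign_constant_if_no_interior_zero: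
  fixes g :: "real \<Rightarrow> real"
  assumes cont: "continuous_on {a..b} g"
    and nonzero: "\<And>x. x \<in> {a<..<b} \<Longrightarrow> g x \<noteq> 0"
  shows "(\<forall>x\<in>{a..b}. 0 \<le> g x) \<or> (\<forall>x\<in>{a..b}. g x \<le> 0)"
proof (rule ccontr)
  assume "\<not> ?thesis"
  then obtain p q where pq: "p \<in> {a..b}" "q \<in> {a..b}" "g p < 0" "0 < g q"
    by (auto simp: not_le)
  have "\<exists>z. min p q \<le> z \<and> z \<le> max p q \<and> g z = 0"
  proof (cases "p \<le> q")
    case True
    then show ?thesis
      using IVT'[where f=g and a=p and b=q and y=0] pq continuous_on_subset[OF cont, of "{p..q}"]
      by auto
  next
    case False
    then show ?thesis
      using IVT2'[where f=g and a=q and b=p and y=0] pq continuous_on_subset[OF cont, of "{q..p}"]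
      by auto
  qed
  then obtain z where z: "min p q \<le> z" "z \<le> max p q" "g z = 0" by blast
  then have "z \<noteq> p" "z \<noteq> q" using pq by auto
  with z pq have "z \<in> {a<..<b}" by auto
  with z nonzero show False by blast
qed

lemma integral_abs_deriv_eq_if_no_interior_zero:
  fixes f f' :: "real \<Rightarrow> real"
  assumes "a \<le> b"
    and deriv: "\<And>x. x \<in> {a..b} \<Longrightarrow> (f has_real_derivative f' x) (at x)"
    and cont: "continuous_on {a..b} f'"
    and nonzero: "\<And>x. x \<in> {a<..<b} \<Longrightarrow> f' x \<noteq> 0"
  shows "integral {a..b} (\<lambda>x. \<bar>f' x\<bar>) = \<bar>f b - f a\<bar>"
proof -
  have ftc: "(f' has_integral f b - f a) {a..b}"
    using deriv by (intro fundamental_theorem_of_calculus[OF \<open>a \<le> b\<close>])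
       (auto simp: has_real_derivative_iff_has_vector_derivative intro: has_vector_derivative_at_within)
  from continuous_on_sign_constant_if_no_interior_zero[OF cont nonzero]
  show ?thesis
  proof
    assume nonneg: "\<forall>x\<in>{a..b}. 0 \<le> f' x"
    have abs: "((\<lambda>x. \<bar>f' x\<bar>) has_integral f b - f a) {a..b}"
      using ftc by (rule has_integral_eq[rotated]) (use nonneg in auto)
    moreover have "0 \<le> f b - f a"
      using abs by (rule has_integral_nonneg) simp
    ultimately show ?thesis by (simp add: integral_unique)
  next
    assume nonpos: "\<forall>x\<in>{a..b}. f' x \<le> 0"
    have abs: "((\<lambda>x. \<bar>f' x\<bar>) has_integral - (f b - f a)) {a..b}"
      using has_integral_neg[OF ftc] by (rule has_integral_eq[rotated]) (use nonpos in auto)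
    moreover have "0 \<le> - (f b - f a)"
      using abs by (rule has_integral_nonneg) simp
    ultimately show ?thesis by (simp add: integral_unique)
  qed
qed

lemma integral_abs_deriv_le_card_zeros:
  fixes f f' :: "real \<Rightarrow> real" and m M :: real
  assumes "a \<le> b"
    and deriv: "\<And>x. x \<in> {a..b} \<Longrightarrow> (f has_real_derivative f' x) (at x)"
    and cont: "continuous_on {a..b} f'"
    and range: "\<And>x. x \<in> {a..b} \<Longrightarrow> f x \<in> {m..M}"
    and fin: "finite {x\<in>{a<..<b}. f' x = 0}"
  shows "integral {a..b} (\<lambda>x. \<bar>f' x\<bar>) \<le> (card {x\<in>{a<..<b}. f' x = 0} + 1) * (M - m)"
  using assms
proof (induction "card {x\<in>{a<..<b}. f' x = 0}" arbitrary: a b rule: less_induct)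
  case less
  let ?Z = "{x\<in>{a<..<b}. f' x = 0}"
  have "m \<le> M" using less.prems(1) less.prems(4)[of a] by auto
  show ?case
  proof (cases "?Z = {}")
    case True
    then have "integral {a..b} (\<lambda>x. \<bar>f' x\<bar>) = \<bar>f b - f a\<bar>"
      using less.prems by (intro integral_abs_deriv_eq_if_no_interior_zero) auto
    also have "\<dots> \<le> M - m"
      using less.prems(1) less.prems(4)[of a] less.prems(4)[of b] by auto
    finally show ?thesis unfolding True by simp
  next
    case False
    then obtain c where c: "c \<in> ?Z" by blast
    let ?Z1 = "{x\<in>{a<..<c}. f' x = 0}" and ?Z2 = "{x\<in>{c<..<b}. f' x = 0}"
    have sub: "?Z1 \<union> ?Z2 \<subseteq> ?Z - {c}" and disj: "?Z1 \<inter> ?Z2 = {}" using c by auto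
    then have fin12: "finite ?Z1" "finite ?Z2" using less.prems(5) by (auto intro: finite_subset)
    have "card ?Z1 + card ?Z2 \<le> card (?Z - {c})"
      using card_mono[OF _ sub] card_Un_disjoint[OF fin12 disj] less.prems(5) by simp
    moreover have "card (?Z - {c}) + 1 = card ?Z"
      using card.remove[OF less.prems(5) c] by simp
    ultimately have card12: "card ?Z1 + card ?Z2 + 1 \<le> card ?Z" by linarith
    have acb: "a \<le> c" "c \<le> b" using c by auto
    have left: "integral {a..c} (\<lambda>x. \<bar>f' x\<bar>) \<le> (card ?Z1 + 1) * (M - m)"
      using card12 acb less.prems fin12
      by (intro less.hyps) (auto intro: continuous_on_subset[OF less.prems(3)])
    have right: "integral {c..b} (\<lambda>x. \<bar>f' x\<bar>) \<le> (card ?Z2 + 1) * (M - m)"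
      using card12 acb less.prems fin12
      by (intro less.hyps) (auto intro: continuous_on_subset[OF less.prems(3)])
    have "(\<lambda>x. \<bar>f' x\<bar>) integrable_on {a..b}"
      by (intro integrable_continuous_interval continuous_intros less.prems)
    then have "integral {a..b} (\<lambda>x. \<bar>f' x\<bar>)
        = integral {a..c} (\<lambda>x. \<bar>f' x\<bar>) + integral {c..b} (\<lambda>x. \<bar>f' x\<bar>)"
      using acb by (simp add: Henstock_Kurzweil_Integration.integral_combine)
    also have "\<dots> \<le> (card ?Z1 + card ?Z2 + 2) * (M - m)"
      using left right by (simp add: algebra_simps)
    also have "\<dots> \<le> (card ?Z + 1) * (M - m)"
      using card12 \<open>m \<le> M\<close> by (intro mult_right_mono) simp_all
    finally show ?thesis .
  qed
qed

lemma SUP_indicator_Icc_eq_indicator_Ioc: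
  fixes a b t :: real and g :: "real \<Rightarrow> ennreal"
  assumes "a < b"
  shows "(SUP n. g t * indicator {a + (b - a) / Suc n..b} t) = g t * indicator {a<..b} t"
proof (cases "t \<in> {a<..b}")
  case True
  obtain n where "inverse (Suc n) < (t - a) / (b - a)"
    using True reals_Archimedean[of "(t - a) / (b - a)"] by auto
  then have "a + (b - a) / Suc n \<le> t"
    using True by (simp add: field_simps)
  then have hit: "g t * indicator {a + (b - a) / Suc n..b} t = g t"
    using True by simp
  have "(SUP m. g t * indicator {a + (b - a) / Suc m..b} t) = g t"
  proof (rule antisym)
    show "(SUP m. g t * indicator {a + (b - a) / Suc m..b} t) \<le> g t"
      by (rule SUP_least) (simp split: split_indicator)
    show "g t \<le> (SUP m. g t * indicator {a + (b - a) / Suc m..b} t)"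
      by (rule SUP_upper2[of n]) (simp_all only: hit UNIV_I order_refl)
  qed
  then show ?thesis
    using True by simp
next
  case False
  moreover have "a < a + (b - a) / Suc n" for n
    using assms by simp
  ultimately have "t \<notin> {a + (b - a) / Suc n..b}" for n
    by (metis greaterThanAtMost_iff atLeastAtMost_iff order_less_le_trans)
  with False show ?thesis by simp
qed

lemma nn_integral_Ioc_le_if_integrals_Icc_le:
  fixes f :: "real \<Rightarrow> real"
  assumes cont: "continuous_on {a<..b} f"
    and bound: "\<And>c. a < c \<Longrightarrow> c \<le> b \<Longrightarrow> integral {c..b} (\<lambda>t. \<bar>f t\<bar>) \<le> B"
  shows "(\<integral>\<^sup>+ t \<in> {a<..b}. ennreal \<bar>f t\<bar> \<partial>lborel) \<le> ennreal B"
proof (cases "a < b")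
  case False
  then show ?thesis by simp
next
  case True
  define c where "c n = a + (b - a) / Suc n" for n :: nat
  have c: "a < c n" "c n \<le> b" for n
    using True by (auto simp: c_def field_simps intro: mult_right_mono)
  define G where "G n t = ennreal \<bar>f t\<bar> * indicator {c n..b} t" for n t
  have inc: "incseq G"
  proof (intro incseq_SucI le_funI)
    fix n t
    have "c (Suc n) \<le> c n"
      using True unfolding c_def by (intro add_left_mono divide_left_mono) auto
    then show "G n t \<le> G (Suc n) t"
      unfolding G_def by (auto split: split_indicator)
  qed
  have meas: "G n \<in> borel_measurable lborel" for n
  proof -
    have "continuous_on {c n..b} (\<lambda>t. \<bar>f t\<bar>)"
      using c[of n] by (intro continuous_intros continuous_on_subset[OF cont]) auto
    then have "(\<lambda>t. indicator {c n..b} t *\<^sub>R \<bar>f t\<bar>) \<in> borel_measurable borel"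
      by (intro borel_measurable_continuous_on_indicator) auto
    moreover have "G n = (\<lambda>t. ennreal (indicator {c n..b} t *\<^sub>R \<bar>f t\<bar>))"
      unfolding G_def by (auto split: split_indicator)
    ultimately show ?thesis by (simp add: measurable_compose[OF _ measurable_ennreal])
  qed
  have SUP_G: "(SUP n. G n t) = ennreal \<bar>f t\<bar> * indicator {a<..b} t" for t
    unfolding G_def c_def using True by (rule SUP_indicator_Icc_eq_indicator_Ioc)
  have G_le: "integral\<^sup>N lborel (G n) \<le> ennreal B" for n
  proof -
    have "(\<lambda>t. \<bar>f t\<bar>) integrable_on {c n..b}"
      using c[of n]
      by (intro integrable_continuous_interval continuous_intros continuous_on_subset[OF cont]) auto
    then have "integral\<^sup>N lborel (G n) = ennreal (integral {c n..b} (\<lambda>t. \<bar>f t\<bar>))"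
      unfolding G_def by (intro nn_integral_has_integral_lebesgue') auto
    then show ?thesis using bound c by (simp add: ennreal_leI)
  qed
  have "(\<integral>\<^sup>+ t \<in> {a<..b}. ennreal \<bar>f t\<bar> \<partial>lborel) = (\<integral>\<^sup>+ t. (SUP n. G n t) \<partial>lborel)"
    by (simp add: SUP_G)
  also have "\<dots> = (SUP n. integral\<^sup>N lborel (G n))"
    by (rule nn_integral_monotone_convergence_SUP[OF inc meas])
  also have "\<dots> \<le> ennreal B"
    by (rule SUP_least) (rule G_le)
  finally show ?thesis .
qed

definition log_K :: "real \<Rightarrow> real \<Rightarrow> real \<Rightarrow> real" where
  "log_K t x u = R x - ln (1 - exp (-2*t)) / 2 - (exp (-t) * u - x)\<^sup>2 / (2 * (1 - exp (-2*t)))"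

definition Kdot_cubic :: "real \<Rightarrow> real \<Rightarrow> real \<Rightarrow> real" where
  "Kdot_cubic s x u = s ^ 3 - u * x * s ^ 2 + (u ^ 2 + x ^ 2 - 1) * s - u * x"

lemma K_eq_exp_log_K:
  assumes "0 < t"
  shows "K t x u = exp (log_K t x u)"
proof -
  define v where "v = 1 - exp (-2*t)"
  define A where "A = (exp (-t) * u - x)\<^sup>2 / (2 * v)"
  have "0 < v" using assms by (simp add: v_def)
  then have sqrt_v: "sqrt v = exp (ln v / 2)"
    by (simp add: powr_half_sqrt[symmetric] powr_def)
  have "K t x u = exp (R x) / exp (ln v / 2) * exp (- A)"
    unfolding K_def sqrt_v[unfolded v_def] by (simp add: A_def v_def)
  also have "\<dots> = exp (R x - ln v / 2 - A)"
    by (simp only: exp_diff exp_minus divide_inverse)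
  finally show ?thesis unfolding log_K_def A_def v_def .
qed

lemma has_real_derivative_log_K:
  assumes "0 < t"
  shows "((\<lambda>s. log_K s x u) has_real_derivative
           exp (-t) * Kdot_cubic (exp (-t)) x u / (1 - exp (-2*t))\<^sup>2) (at t)"
proof -
  have v: "0 < 1 - exp (-2*t)" using assms by simp
  have e2: "exp (-2*t) = exp (-t) ^ 2" by (simp add: power2_eq_square flip: exp_add)
  show ?thesis
    unfolding log_K_def
    apply (rule derivative_eq_intros refl v | (use v in simp; fail))+
    using v unfolding Kdot_cubic_def e2
    apply (simp add: divide_simps)
    apply (simp add: algebra_simps power2_eq_square power3_eq_cube)
    done
qed

lemma K_pos: "0 < t \<Longrightarrow> 0 < K t x u"
  by (simp add: K_eq_exp_log_K)

lemma K_has_real_derivative: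
  assumes "0 < t"
  shows "((\<lambda>s. K s x u) has_real_derivative
           K t x u * (exp (-t) * Kdot_cubic (exp (-t)) x u / (1 - exp (-2*t))\<^sup>2)) (at t)"
proof -
  have "((\<lambda>s. exp (log_K s x u)) has_real_derivative
           K t x u * (exp (-t) * Kdot_cubic (exp (-t)) x u / (1 - exp (-2*t))\<^sup>2)) (at t)"
    unfolding K_eq_exp_log_K[OF assms]
    by (rule DERIV_chain2[OF DERIV_exp has_real_derivative_log_K[OF assms]])
  then show ?thesis
    by (rule has_field_derivative_transform_within_open[where S="{0<..}"])
       (use assms in \<open>simp_all add: K_eq_exp_log_K\<close>)
qed

lemma Kdot_eq:
  "0 < t \<Longrightarrow> Kdot t x u = K t x u * (exp (-t) * Kdot_cubic (exp (-t)) x u / (1 - exp (-2*t))\<^sup>2)"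
  unfolding Kdot_def by (rule DERIV_imp_deriv[OF K_has_real_derivative])

lemma K_has_real_derivative_Kdot:
  assumes "0 < t"
  shows "((\<lambda>s. K s x u) has_real_derivative Kdot t x u) (at t)"
  unfolding Kdot_eq[OF assms] by (rule K_has_real_derivative[OF assms])

lemma continuous_on_Kdot: "continuous_on {0<..} (\<lambda>t. Kdot t x u)"
proof -
  have "continuous_on {0<..} (\<lambda>t. K t x u)"
    using DERIV_isCont[OF K_has_real_derivative_Kdot]
    by (auto intro!: continuous_at_imp_continuous_on)
  then have "continuous_on {0<..}
      (\<lambda>t. K t x u * (exp (-t) * Kdot_cubic (exp (-t)) x u / (1 - exp (-2*t))\<^sup>2))"
    unfolding Kdot_cubic_def by (intro continuous_intros) auto
  then show ?thesis
    by (rule continuous_on_cong[THEN iffD1, OF refl, rotated]) (simp add: Kdot_eq)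
qed

lemma poly_Kdot_cubic: "poly [:- (u * x), u\<^sup>2 + x\<^sup>2 - 1, - (u * x), 1:] s = Kdot_cubic s x u"
  unfolding Kdot_cubic_def by (simp add: algebra_simps power2_eq_square power3_eq_cube)

lemma finite_Kdot_cubic_roots: "finite {s. Kdot_cubic s x u = 0}"
  unfolding poly_Kdot_cubic[symmetric] by (rule poly_roots_finite) simp

lemma card_Kdot_cubic_roots_le: "card {s. Kdot_cubic s x u = 0} \<le> 3"
  unfolding poly_Kdot_cubic[symmetric] by (rule order_trans[OF card_poly_roots_bound]) simp_all

lemma Kdot_zeros_subset:
  "{t. 0 < t \<and> Kdot t x u = 0} \<subseteq> (\<lambda>s. - ln s) ` {s. Kdot_cubic s x u = 0}"
proof
  fix t assume "t \<in> {t. 0 < t \<and> Kdot t x u = 0}"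
  then have t: "0 < t" "Kdot t x u = 0" by auto
  then have "K t x u * (exp (-t) * Kdot_cubic (exp (-t)) x u / (1 - exp (-2*t))\<^sup>2) = 0"
    by (simp only: Kdot_eq)
  then have "Kdot_cubic (exp (-t)) x u = 0"
    using K_pos[of t x u] t(1) by simp
  then show "t \<in> (\<lambda>s. - ln s) ` {s. Kdot_cubic s x u = 0}"
    by (intro image_eqI[of _ _ "exp (-t)"]) auto
qed

lemma finite_Kdot_zeros: "finite {t. 0 < t \<and> Kdot t x u = 0}"
  using finite_subset[OF Kdot_zeros_subset] finite_Kdot_cubic_roots by blast

lemma card_Kdot_zeros_le: "card {t. 0 < t \<and> Kdot t x u = 0} \<le> 3"
  using card_mono[OF finite_imageI[OF finite_Kdot_cubic_roots] Kdot_zeros_subset]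
    card_image_le[OF finite_Kdot_cubic_roots, of "\<lambda>s. - ln s"] card_Kdot_cubic_roots_le
  by (meson le_trans)

lemma integral_abs_Kdot_le:
  assumes "0 < c" "c \<le> b" and K_le: "\<And>t. t \<in> {c..b} \<Longrightarrow> K t x u \<le> M"
  shows "integral {c..b} (\<lambda>t. \<bar>Kdot t x u\<bar>) \<le> 4 * M"
proof -
  let ?Z = "{t\<in>{c<..<b}. Kdot t x u = 0}"
  have Z: "?Z \<subseteq> {t. 0 < t \<and> Kdot t x u = 0}" using assms(1) by auto
  have "integral {c..b} (\<lambda>t. \<bar>Kdot t x u\<bar>) \<le> (card ?Z + 1) * (M - 0)"
  proof (rule integral_abs_deriv_le_card_zeros)
    show "((\<lambda>s. K s x u) has_real_derivative Kdot t x u) (at t)" if "t \<in> {c..b}" for t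
      using that assms(1) by (intro K_has_real_derivative_Kdot) simp
    show "continuous_on {c..b} (\<lambda>t. Kdot t x u)"
      using assms(1) by (intro continuous_on_subset[OF continuous_on_Kdot]) auto
    show "K t x u \<in> {0..M}" if "t \<in> {c..b}" for t
      using that assms(1) K_le K_pos[of t x u] by auto
  qed (use assms finite_subset[OF Z finite_Kdot_zeros] in auto)
  also have "\<dots> \<le> 4 * M"
  proof -
    have "card ?Z \<le> 3"
      using card_mono[OF finite_Kdot_zeros Z] card_Kdot_zeros_le[of x u] by linarith
    moreover have "0 \<le> M"
      using K_le[of b] K_pos[of b x u] assms by force
    ultimately show ?thesis
      unfolding diff_zero by (intro mult_right_mono) auto
  qed
  finally show ?thesis .
qed

theorem mainTheorem7:
  fixes x u :: real
  shows "(\<integral>\<^sup>+ t \<in> {0<..1}. ennreal \<bar>Kdot t x u\<bar> \<partial>lborel)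
           \<le> 10 * (SUP t \<in> {0<..1}. ennreal (K t x u))"
proof (cases "(SUP t \<in> {0<..1}. ennreal (K t x u)) = \<infinity>")
  case True
  then show ?thesis unfolding True by simp
next
  case False
  then obtain M where M: "(SUP t \<in> {0<..1}. ennreal (K t x u)) = ennreal M" "0 \<le> M"
    using ennreal_cases[of "SUP t \<in> {0<..1}. ennreal (K t x u)"] by auto
  have K_le: "K t x u \<le> M" if "t \<in> {0<..1}" for t
    using SUP_upper[OF that, of "\<lambda>t. ennreal (K t x u)"] M by simp
  have "(\<integral>\<^sup>+ t \<in> {0<..1}. ennreal \<bar>Kdot t x u\<bar> \<partial>lborel) \<le> ennreal (4 * M)"
    by (rule nn_integral_Ioc_le_if_integrals_Icc_le)
       (auto intro!: continuous_on_subset[OF continuous_on_Kdot] integral_abs_Kdot_le K_le)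
  also have "\<dots> = 4 * ennreal M"
    by (simp add: ennreal_mult')
  also have "\<dots> \<le> 10 * ennreal M"
    by (rule mult_right_mono) simp_all
  finally show ?thesis
    using M(1) by simp
qed

end
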